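(* Let $L_1,L_2$ be disjoint first-order languages without function symbols, each containing at least one constant symbol, let $T_1,T_2$ be an $L_1$-theory and an $L_2$-theory, and let $T_{\mathrm{sim}}$ be the theory of simple products of $T_1$ and $T_2$. Let $\mathcal N$ be a monster model of $T_{\mathrm{sim}}$, identified with the standard simple product of a model $\mathcal M_1=(M_1,\ldots)$ of $T_1$ and a model $\mathcal M_2=(M_2,\ldots)$ of $T_2$, so that $N=M_1\times M_2$, and let $\pi_k:N\to M_k$ be the projections. Let $A\subseteq N$ be small and $A_k=\pi_k(A)$. Let $(a_i)_{i\in I}$ and $(b_i)_{i\in I}$ be sequences of elements of $M_1$ and $M_2$ respectively, indexed by a linearly ordered set $I$. Then the sequence $((a_i,b_i))_{i\in I}$ is $A$-indiscernible in $\mathcal N$ if and only if $(a_i)_{i\in I}$ is $A_1$-indiscernible in $\mathcal M_1$ and $(b_i)_{i\in I}$ is $A_2$-indiscernible in $\mathcal M_2$.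
   Context: Language of simple product $L_{\mathrm{sim}}$: constant symbols $C_{(c_1,c_2)}$ for each pair of constants $c_1\in L_1$, $c_2\in L_2$; predicate symbols: those of $L_1$, those of $L_2$, and binary $\sim_1,\sim_2$. $T_\times$ states: $\sim_1,\sim_2$ are equivalence relations; $\forall x\forall y((x\sim_1y)\wedge(x\sim_2y)\to x=y)$; $\forall x\forall y\exists z((x\sim_1z)\wedge(y\sim_2z))$. Standard conversion $\widetilde\phi$ of an $L_k$-formula $\phi$: rewrite atomic formulas with constants as $\exists\bar y(R(\bar y)\wedge\bigwedge t_i=y_i)$; equality of variables $x=y$ becomes $x\sim_k y$; equality with a constant $c\in L_k$ uses $\sim_k$ and $C_{(c,d)}$ (if $k=1$) or $C_{(d,c)}$ (if $k=2$), $d$ a fixed constant of the other language; $R\in L_k$ atomic formulas unchanged; commutes with Boolean connectives and $\exists$. $T_{\mathrm{sim}}$: $T_\times$, all $\widetilde\sigma$ for $\sigma\in T_1\cup T_2$, and for each $k$ and $R\in L_k$, $\forall\bar x\forall\bar y((\bar x\sim_k\bar y)\to(R(\bar x)\leftrightarrow R(\bar y)))$. Standard simple product of $\mathcal M_1,\mathcal M_2$: universe $M_1\times M_2$, $C_{(c_1,c_2)}\mapsto(c_1^{\mathcal M_1},c_2^{\mathcal M_2})$, $x\sim_k y$ iff $\pi_k(x)=\pi_k(y)$, and $R\in L_k$ holds of $\bar c$ iff $\mathcal M_k\models R(\pi_k(\bar c))$. A sequence $(a_i)_{i\in I}$ in a structure is $A$-indiscernible if for every $n$, all $i_1<\cdots<i_n$,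 $j_1<\cdots<j_n$ in $I$ and every formula $\phi(x_1,\ldots,x_n)$ with parameters from $A$, $\phi(a_{i_1},\ldots,a_{i_n})\leftrightarrow\phi(a_{j_1},\ldots,a_{j_n})$ holds. *)

theory Defs
  imports Main
begin

text \<open>Terms: variables, constant symbols of the language, and parameters
  (elements of the structure, used to express formulas with parameters).\<close>
datatype ('c, 'a) trm = Var nat | Cst 'c | Par 'a

datatype ('r, 'c, 'a) fm =
    Eq "('c, 'a) trm" "('c, 'a) trm"
  | Rel 'r "('c, 'a) trm list"
  | Neg "('r, 'c, 'a) fm"
  | Conj "('r, 'c, 'a) fm" "('r, 'c, 'a) fm"
  | Ex nat "('r, 'c, 'a) fm"

text \<open>A structure: the universe is the whole type 'a.\<close>
record ('r, 'c, 'a) struct =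
  cst :: "'c \<Rightarrow> 'a"
  rel :: "'r \<Rightarrow> 'a list \<Rightarrow> bool"

fun eval_trm :: "('r, 'c, 'a) struct \<Rightarrow> (nat \<Rightarrow> 'a) \<Rightarrow> ('c, 'a) trm \<Rightarrow> 'a" where
  "eval_trm S e (Var n) = e n"
| "eval_trm S e (Cst c) = cst S c"
| "eval_trm S e (Par a) = a"

fun sat :: "('r, 'c, 'a) struct \<Rightarrow> (nat \<Rightarrow> 'a) \<Rightarrow> ('r, 'c, 'a) fm \<Rightarrow> bool" where
  "sat S e (Eq t u) = (eval_trm S e t = eval_trm S e u)"
| "sat S e (Rel r ts) = rel S r (map (eval_trm S e) ts)"
| "sat S e (Neg \<phi>) = (\<not> sat S e \<phi>)"
| "sat S e (Conj \<phi> \<psi>) = (sat S e \<phi> \<and> sat S e \<psi>)"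
| "sat S e (Ex x \<phi>) = (\<exists>v. sat S (e(x := v)) \<phi>)"

fun wf :: "('r \<Rightarrow> nat) \<Rightarrow> ('r, 'c, 'a) fm \<Rightarrow> bool" where
  "wf ar (Eq t u) = True"
| "wf ar (Rel r ts) = (length ts = ar r)"
| "wf ar (Neg \<phi>) = wf ar \<phi>"
| "wf ar (Conj \<phi> \<psi>) = (wf ar \<phi> \<and> wf ar \<psi>)"
| "wf ar (Ex x \<phi>) = wf ar \<phi>"

fun fv_trm :: "('c, 'a) trm \<Rightarrow> nat set" where
  "fv_trm (Var n) = {n}"
| "fv_trm (Cst c) = {}"
| "fv_trm (Par a) = {}"

fun fv :: "('r, 'c, 'a) fm \<Rightarrow> nat set" where
  "fv (Eq t u) = fv_trm t \<union> fv_trm u"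
| "fv (Rel r ts) = (\<Union>t\<in>set ts. fv_trm t)"
| "fv (Neg \<phi>) = fv \<phi>"
| "fv (Conj \<phi> \<psi>) = fv \<phi> \<union> fv \<psi>"
| "fv (Ex x \<phi>) = fv \<phi> - {x}"

fun params_trm :: "('c, 'a) trm \<Rightarrow> 'a set" where
  "params_trm (Var n) = {}"
| "params_trm (Cst c) = {}"
| "params_trm (Par a) = {a}"

fun params :: "('r, 'c, 'a) fm \<Rightarrow> 'a set" where
  "params (Eq t u) = params_trm t \<union> params_trm u"
| "params (Rel r ts) = (\<Union>t\<in>set ts. params_trm t)"
| "params (Neg \<phi>) = params \<phi>"
| "params (Conj \<phi> \<psi>) = params \<phi> \<union> params \<psi>"
| "params (Ex x \<phi>) = params \<phi>"

definition sentence :: "('r \<Rightarrow> nat) \<Rightarrow> ('r, 'c, 'a) fm \<Rightarrow> bool" where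
  "sentence ar \<phi> \<longleftrightarrow> wf ar \<phi> \<and> fv \<phi> = {} \<and> params \<phi> = {}"

definition models :: "('r, 'c, 'a) struct \<Rightarrow> ('r, 'c, 'a) fm set \<Rightarrow> bool" where
  "models S T \<longleftrightarrow> (\<forall>\<phi>\<in>T. \<forall>e. sat S e \<phi>)"

definition indiscernible ::
  "('r \<Rightarrow> nat) \<Rightarrow> ('r, 'c, 'a) struct \<Rightarrow> 'a set \<Rightarrow> ('i::linorder \<Rightarrow> 'a) \<Rightarrow> bool" where
  "indiscernible ar S A a \<longleftrightarrow>
     (\<forall>(n::nat) (s::nat \<Rightarrow> 'i) (t::nat \<Rightarrow> 'i) (\<phi>::('r, 'c, 'a) fm).
        strict_mono_on {..<n} s \<longrightarrow> strict_mono_on {..<n} t \<longrightarrow>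
        wf ar \<phi> \<longrightarrow> fv \<phi> \<subseteq> {..<n} \<longrightarrow> params \<phi> \<subseteq> A \<longrightarrow>
        (sat S (\<lambda>k. a (s k)) \<phi> \<longleftrightarrow> sat S (\<lambda>k. a (t k)) \<phi>))"

text \<open>Relation symbols of L_sim: those of L1, those of L2 (disjoint by construction),
  and the binary symbols \<sim>1, \<sim>2. Constant symbols of L_sim: pairs (c1, c2).\<close>
datatype ('r1, 'r2) simrel = R1 'r1 | R2 'r2 | Sim1 | Sim2

fun sim_ar :: "('r1 \<Rightarrow> nat) \<Rightarrow> ('r2 \<Rightarrow> nat) \<Rightarrow> ('r1, 'r2) simrel \<Rightarrow> nat" where
  "sim_ar ar1 ar2 (R1 r) = ar1 r"
| "sim_ar ar1 ar2 (R2 r) = ar2 r"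
| "sim_ar ar1 ar2 Sim1 = 2"
| "sim_ar ar1 ar2 Sim2 = 2"

fun sim_rel :: "('r1, 'c1, 'a1) struct \<Rightarrow> ('r2, 'c2, 'a2) struct \<Rightarrow>
    ('r1, 'r2) simrel \<Rightarrow> ('a1 \<times> 'a2) list \<Rightarrow> bool" where
  "sim_rel M1 M2 (R1 r) xs = rel M1 r (map fst xs)"
| "sim_rel M1 M2 (R2 r) xs = rel M2 r (map snd xs)"
| "sim_rel M1 M2 Sim1 xs = (length xs = 2 \<and> fst (xs ! 0) = fst (xs ! 1))"
| "sim_rel M1 M2 Sim2 xs = (length xs = 2 \<and> snd (xs ! 0) = snd (xs ! 1))"

definition simple_product :: "('r1, 'c1, 'a1) struct \<Rightarrow> ('r2, 'c2, 'a2) struct \<Rightarrow>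
    (('r1, 'r2) simrel, 'c1 \<times> 'c2, 'a1 \<times> 'a2) struct" where
  "simple_product M1 M2 =
     \<lparr> cst = (\<lambda>(c1, c2). (cst M1 c1, cst M2 c2)), rel = sim_rel M1 M2 \<rparr>"

end

(*
  In the simple product every formula is equivalent, uniformly in the assignment, to a finite
  disjunction of conjunctions alpha(first coordinates) /\ beta(second coordinates) with alpha an
  L1-formula and beta an L2-formula over the projected parameters (a Feferman-Vaught
  decomposition). The induction goes through the existential quantifier because the two
  coordinates of a witness can be chosen independently. So indiscernibility of both coordinate
  sequences gives indiscernibility of the pairs. Conversely, an L1-formula holds of the first
  coordinates iff its standard conversion, in which equality becomes ~1, holds of the pairs, so
  indiscernibility of the pairs passes to each coordinate. Neither T1, T2 nor saturation of the
  monster model plays any role.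
*)
theory Submission
  imports Defs
begin

fun translate :: "('r \<Rightarrow> 's) \<Rightarrow> 's \<Rightarrow> ('c \<Rightarrow> 'd) \<Rightarrow> ('a \<Rightarrow> 'b) \<Rightarrow>
    ('r, 'c, 'a) fm \<Rightarrow> ('s, 'd, 'b) fm" where
  "translate R E f g (Eq t u) = Rel E [map_trm f g t, map_trm f g u]"
| "translate R E f g (Rel r ts) = Rel (R r) (map (map_trm f g) ts)"
| "translate R E f g (Neg \<phi>) = Neg (translate R E f g \<phi>)"
| "translate R E f g (Conj \<phi> \<psi>) = Conj (translate R E f g \<phi>) (translate R E f g \<psi>)"
| "translate R E f g (Ex x \<phi>) = Ex x (translate R E f g \<phi>)"

lemma fv_trm_map_trm [simp]: "fv_trm (map_trm f g t) = fv_trm t"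
  by (cases t) auto

lemma params_trm_map_trm [simp]: "params_trm (map_trm f g t) = g ` params_trm t"
  by (cases t) auto

lemma fv_translate [simp]: "fv (translate R E f g \<phi>) = fv \<phi>"
  by (induction \<phi>) auto

lemma params_translate [simp]: "params (translate R E f g \<phi>) = g ` params \<phi>"
  by (induction \<phi>) auto

lemma wf_translate:
  assumes "\<And>r. ar' (R r) = ar r" and "ar' E = 2" and "wf ar \<phi>"
  shows "wf ar' (translate R E f g \<phi>)"
  using assms(3) by (induction \<phi>) (auto simp: assms(1,2))

lemma eval_trm_map_trm:
  assumes "\<And>c. h (cst N (f c)) = cst M c" and "\<And>x. h (g x) = x"
  shows "h (eval_trm N e (map_trm f g t)) = eval_trm M (h \<circ> e) t"
  using assms by (cases t) simp_all

lemma sat_translate: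
  assumes "surj h"
    and rel_R: "\<And>r xs. rel N (R r) xs = rel M r (map h xs)"
    and rel_E: "\<And>x y. rel N E [x, y] \<longleftrightarrow> h x = h y"
    and cst: "\<And>c. h (cst N (f c)) = cst M c"
    and par: "\<And>x. h (g x) = x"
  shows "sat N e (translate R E f g \<phi>) \<longleftrightarrow> sat M (h \<circ> e) \<phi>"
proof (induction \<phi> arbitrary: e)
  case (Ex x \<phi>)
  have "sat N e (translate R E f g (Ex x \<phi>)) \<longleftrightarrow> (\<exists>v. sat M ((h \<circ> e)(x := h v)) \<phi>)"
    by (simp only: translate.simps sat.simps Ex.IH fun_upd_comp)
  also have "\<dots> \<longleftrightarrow> sat M (h \<circ> e) (Ex x \<phi>)"
    using \<open>surj h\<close> by (metis sat.simps(5) surjD)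
  finally show ?case .
qed (simp_all add: rel_R rel_E eval_trm_map_trm[of h N f M g, OF cst par] comp_def)

definition formulas_over :: "('r \<Rightarrow> nat) \<Rightarrow> nat set \<Rightarrow> 'a set \<Rightarrow> ('r, 'c, 'a) fm set" where
  "formulas_over ar X A = {\<phi>. wf ar \<phi> \<and> fv \<phi> \<subseteq> X \<and> params \<phi> \<subseteq> A}"

lemma formulas_over_mono: "X \<subseteq> Y \<Longrightarrow> formulas_over ar X A \<subseteq> formulas_over ar Y A"
  by (auto simp: formulas_over_def)

lemma Conj_formulas_over:
  "\<phi> \<in> formulas_over ar X A \<Longrightarrow> \<psi> \<in> formulas_over ar Y A \<Longrightarrow>
   Conj \<phi> \<psi> \<in> formulas_over ar (X \<union> Y) A"
  by (auto simp: formulas_over_def)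

lemma Ex_formulas_over: "\<phi> \<in> formulas_over ar X A \<Longrightarrow> Ex x \<phi> \<in> formulas_over ar (X - {x}) A"
  by (auto simp: formulas_over_def)

definition truth :: "('r, 'c, 'a) fm" where
  "truth = Ex 0 (Eq (Var 0) (Var 0))"

lemma truth_simps [simp]:
  "sat S e truth" "wf ar truth" "fv truth = {}" "params truth = {}"
  by (simp_all add: truth_def)

lemma truth_formulas_over [simp]: "truth \<in> formulas_over ar X A"
  by (simp add: formulas_over_def)

text \<open>A list of pairs \<open>(\<alpha>, \<beta>)\<close> stands for the disjunction of the formulas
  \<open>\<alpha>\<close>(first coordinates) \<open>\<and> \<beta>\<close>(second coordinates).\<close>

type_synonym ('r1, 'c1, 'a1, 'r2, 'c2, 'a2) pairs =
  "(('r1, 'c1, 'a1) fm \<times> ('r2, 'c2, 'a2) fm) list"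

definition sat_pairs :: "('r1, 'c1, 'a1) struct \<Rightarrow> ('r2, 'c2, 'a2) struct \<Rightarrow>
    (nat \<Rightarrow> 'a1) \<Rightarrow> (nat \<Rightarrow> 'a2) \<Rightarrow> ('r1, 'c1, 'a1, 'r2, 'c2, 'a2) pairs \<Rightarrow> bool" where
  "sat_pairs M1 M2 e1 e2 D \<longleftrightarrow> (\<exists>(\<alpha>, \<beta>) \<in> set D. sat M1 e1 \<alpha> \<and> sat M2 e2 \<beta>)"

definition conj_pairs :: "('r1, 'c1, 'a1, 'r2, 'c2, 'a2) pairs \<Rightarrow>
    ('r1, 'c1, 'a1, 'r2, 'c2, 'a2) pairs \<Rightarrow> ('r1, 'c1, 'a1, 'r2, 'c2, 'a2) pairs" where
  "conj_pairs D D' = [(Conj \<alpha> \<alpha>', Conj \<beta> \<beta>'). (\<alpha>, \<beta>) \<leftarrow> D, (\<alpha>', \<beta>') \<leftarrow> D']"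

fun neg_pairs :: "('r1, 'c1, 'a1, 'r2, 'c2, 'a2) pairs \<Rightarrow> ('r1, 'c1, 'a1, 'r2, 'c2, 'a2) pairs" where
  "neg_pairs [] = [(truth, truth)]"
| "neg_pairs ((\<alpha>, \<beta>) # D) = conj_pairs [(Neg \<alpha>, truth), (truth, Neg \<beta>)] (neg_pairs D)"

lemma set_conj_pairs:
  "set (conj_pairs D D') =
     {(Conj \<alpha> \<alpha>', Conj \<beta> \<beta>') | \<alpha> \<beta> \<alpha>' \<beta>'. (\<alpha>, \<beta>) \<in> set D \<and> (\<alpha>', \<beta>') \<in> set D'}"
  unfolding conj_pairs_def by force

lemma sat_pairs_conj_pairs:
  "sat_pairs M1 M2 e1 e2 (conj_pairs D D') \<longleftrightarrow> sat_pairs M1 M2 e1 e2 D \<and> sat_pairs M1 M2 e1 e2 D'"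
  unfolding sat_pairs_def set_conj_pairs by fastforce

lemma sat_pairs_neg_pairs: "sat_pairs M1 M2 e1 e2 (neg_pairs D) \<longleftrightarrow> \<not> sat_pairs M1 M2 e1 e2 D"
  by (induction D rule: neg_pairs.induct) (auto simp: sat_pairs_conj_pairs, auto simp: sat_pairs_def)

lemma conj_pairs_formulas_over:
  assumes "set D \<subseteq> formulas_over ar1 X A1 \<times> formulas_over ar2 X A2"
    and "set D' \<subseteq> formulas_over ar1 Y A1 \<times> formulas_over ar2 Y A2"
  shows "set (conj_pairs D D') \<subseteq> formulas_over ar1 (X \<union> Y) A1 \<times> formulas_over ar2 (X \<union> Y) A2"
  using assms unfolding set_conj_pairs by (blast intro: Conj_formulas_over)

lemma neg_pairs_formulas_over:
  "set D \<subseteq> formulas_over ar1 X A1 \<times> formulas_over ar2 X A2 \<Longrightarrow>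
   set (neg_pairs D) \<subseteq> formulas_over ar1 X A1 \<times> formulas_over ar2 X A2"
proof (induction D rule: neg_pairs.induct)
  case (2 \<alpha> \<beta> D)
  then have
      "set [(Neg \<alpha>, truth), (truth, Neg \<beta>)] \<subseteq> formulas_over ar1 X A1 \<times> formulas_over ar2 X A2"
    and "set D \<subseteq> formulas_over ar1 X A1 \<times> formulas_over ar2 X A2"
    by (auto simp: formulas_over_def)
  from conj_pairs_formulas_over[OF this(1) "2.IH"[OF this(2)]] show ?case
    by simp
qed simp

fun decomp :: "(('r1, 'r2) simrel, 'c1 \<times> 'c2, 'a1 \<times> 'a2) fm \<Rightarrow>
    ('r1, 'c1, 'a1, 'r2, 'c2, 'a2) pairs" where
  "decomp (Eq t u) =
     [(Eq (map_trm fst fst t) (map_trm fst fst u), Eq (map_trm snd snd t) (map_trm snd snd u))]"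
| "decomp (Rel (R1 r) ts) = [(Rel r (map (map_trm fst fst) ts), truth)]"
| "decomp (Rel (R2 r) ts) = [(truth, Rel r (map (map_trm snd snd) ts))]"
| "decomp (Rel Sim1 ts) = [(Eq (map_trm fst fst (ts ! 0)) (map_trm fst fst (ts ! 1)), truth)]"
| "decomp (Rel Sim2 ts) = [(truth, Eq (map_trm snd snd (ts ! 0)) (map_trm snd snd (ts ! 1)))]"
| "decomp (Neg \<phi>) = neg_pairs (decomp \<phi>)"
| "decomp (Conj \<phi> \<psi>) = conj_pairs (decomp \<phi>) (decomp \<psi>)"
| "decomp (Ex x \<phi>) = [(Ex x \<alpha>, Ex x \<beta>). (\<alpha>, \<beta>) \<leftarrow> decomp \<phi>]"

lemma eval_trm_simple_product:
  "fst (eval_trm (simple_product M1 M2) e t) = eval_trm M1 (\<lambda>k. fst (e k)) (map_trm fst fst t)"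
  "snd (eval_trm (simple_product M1 M2) e t) = eval_trm M2 (\<lambda>k. snd (e k)) (map_trm snd snd t)"
  by (cases t; simp add: simple_product_def split: prod.splits)+

lemma rel_simple_product [simp]: "rel (simple_product M1 M2) = sim_rel M1 M2"
  by (simp add: simple_product_def)

lemma sat_decomp:
  "wf (sim_ar ar1 ar2) \<phi> \<Longrightarrow>
   sat (simple_product M1 M2) e \<phi> \<longleftrightarrow> sat_pairs M1 M2 (fst \<circ> e) (snd \<circ> e) (decomp \<phi>)"
proof (induction \<phi> arbitrary: e)
  case (Eq t u)
  then show ?case
    by (simp add: sat_pairs_def eval_trm_simple_product prod_eq_iff)
next
  case (Rel r ts)
  then show ?case
  proof (cases r)
    case Sim1
    with Rel obtain t u where "ts = [t, u]"
      by (auto simp: numeral_2_eq_2 length_Suc_conv)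
    with Sim1 show ?thesis
      by (simp add: sat_pairs_def eval_trm_simple_product)
  next
    case Sim2
    with Rel obtain t u where "ts = [t, u]"
      by (auto simp: numeral_2_eq_2 length_Suc_conv)
    with Sim2 show ?thesis
      by (simp add: sat_pairs_def eval_trm_simple_product)
  qed (simp_all add: sat_pairs_def eval_trm_simple_product comp_def)
next
  case (Ex x \<phi>)
  have "sat (simple_product M1 M2) e (Ex x \<phi>) \<longleftrightarrow>
        (\<exists>v. sat_pairs M1 M2 ((fst \<circ> e)(x := fst v)) ((snd \<circ> e)(x := snd v)) (decomp \<phi>))"
    using Ex by (simp only: sat.simps wf.simps fun_upd_comp)
  also have "\<dots> \<longleftrightarrow> (\<exists>v1 v2. sat_pairs M1 M2 ((fst \<circ> e)(x := v1)) ((snd \<circ> e)(x := v2)) (decomp \<phi>))"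
    by (metis fst_conv snd_conv)
  also have "\<dots> \<longleftrightarrow> sat_pairs M1 M2 (fst \<circ> e) (snd \<circ> e) (decomp (Ex x \<phi>))"
    unfolding sat_pairs_def by (simp add: split_def) blast
  finally show ?case .
qed (simp_all add: sat_pairs_neg_pairs sat_pairs_conj_pairs)

lemma decomp_formulas_over:
  "wf (sim_ar ar1 ar2) \<phi> \<Longrightarrow> params \<phi> \<subseteq> A \<Longrightarrow>
   set (decomp \<phi>) \<subseteq> formulas_over ar1 (fv \<phi>) (fst ` A) \<times> formulas_over ar2 (fv \<phi>) (snd ` A)"
proof (induction \<phi>)
  case (Eq t u)
  then show ?case by (auto simp: formulas_over_def)
next
  case (Rel r ts)
  then show ?case
  proof (cases r)
    case Sim1
    with Rel obtain t u where "ts = [t, u]"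
      by (auto simp: numeral_2_eq_2 length_Suc_conv)
    with Sim1 Rel.prems show ?thesis by (auto simp: formulas_over_def)
  next
    case Sim2
    with Rel obtain t u where "ts = [t, u]"
      by (auto simp: numeral_2_eq_2 length_Suc_conv)
    with Sim2 Rel.prems show ?thesis by (auto simp: formulas_over_def)
  qed (auto simp: formulas_over_def)
next
  case (Neg \<phi>)
  then show ?case by (simp add: neg_pairs_formulas_over)
next
  case (Conj \<phi> \<psi>)
  then show ?case by (simp add: conj_pairs_formulas_over)
next
  case (Ex x \<phi>)
  then have
      "set (decomp \<phi>) \<subseteq> formulas_over ar1 (fv \<phi>) (fst ` A) \<times> formulas_over ar2 (fv \<phi>) (snd ` A)"
    by simp
  then show ?case
    by (auto intro: Ex_formulas_over)
qed

lemma indiscernibleD: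
  "indiscernible ar S A c \<Longrightarrow> strict_mono_on {..<n} s \<Longrightarrow> strict_mono_on {..<n} t \<Longrightarrow>
   \<phi> \<in> formulas_over ar {..<n} A \<Longrightarrow> sat S (\<lambda>k. c (s k)) \<phi> \<longleftrightarrow> sat S (\<lambda>k. c (t k)) \<phi>"
  unfolding indiscernible_def formulas_over_def by blast

lemma indiscernible_simple_product:
  fixes M1 :: "('r1, 'c1, 'a1) struct" and M2 :: "('r2, 'c2, 'a2) struct"
    and a :: "'i::linorder \<Rightarrow> 'a1"
  assumes a: "indiscernible ar1 M1 (fst ` A) a" and b: "indiscernible ar2 M2 (snd ` A) b"
  shows "indiscernible (sim_ar ar1 ar2) (simple_product M1 M2) A (\<lambda>i. (a i, b i))"
  unfolding indiscernible_def
proof (intro allI impI)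
  fix n and s t :: "nat \<Rightarrow> 'i" and \<phi> :: "(('r1, 'r2) simrel, 'c1 \<times> 'c2, 'a1 \<times> 'a2) fm"
  assume s: "strict_mono_on {..<n} s" and t: "strict_mono_on {..<n} t"
    and \<phi>: "wf (sim_ar ar1 ar2) \<phi>" "fv \<phi> \<subseteq> {..<n}" "params \<phi> \<subseteq> A"
  have decomp_over:
    "set (decomp \<phi>) \<subseteq> formulas_over ar1 {..<n} (fst ` A) \<times> formulas_over ar2 {..<n} (snd ` A)"
    using decomp_formulas_over[OF \<phi>(1,3)]
    by (rule order_trans) (intro Sigma_mono formulas_over_mono \<phi>(2))
  have "sat_pairs M1 M2 (\<lambda>k. a (s k)) (\<lambda>k. b (s k)) (decomp \<phi>) \<longleftrightarrow>
        sat_pairs M1 M2 (\<lambda>k. a (t k)) (\<lambda>k. b (t k)) (decomp \<phi>)"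
    unfolding sat_pairs_def
  proof (intro bex_cong refl, clarify)
    fix \<alpha> \<beta>
    assume "(\<alpha>, \<beta>) \<in> set (decomp \<phi>)"
    with decomp_over
    have "\<alpha> \<in> formulas_over ar1 {..<n} (fst ` A)" "\<beta> \<in> formulas_over ar2 {..<n} (snd ` A)"
      by auto
    then show "sat M1 (\<lambda>k. a (s k)) \<alpha> \<and> sat M2 (\<lambda>k. b (s k)) \<beta> \<longleftrightarrow>
               sat M1 (\<lambda>k. a (t k)) \<alpha> \<and> sat M2 (\<lambda>k. b (t k)) \<beta>"
      using indiscernibleD[OF a s t] indiscernibleD[OF b s t] by simp
  qed
  then show "sat (simple_product M1 M2) (\<lambda>k. (a (s k), b (s k))) \<phi> \<longleftrightarrow>
             sat (simple_product M1 M2) (\<lambda>k. (a (t k), b (t k))) \<phi>"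
    by (simp add: sat_decomp[OF \<phi>(1)] comp_def)
qed

lemma indiscernible_transfer:
  fixes M :: "('r, 'c, 'a) struct" and c :: "'i::linorder \<Rightarrow> 'b"
  assumes indisc: "indiscernible ar' N A' c"
    and translation: "\<And>X \<phi>. \<phi> \<in> formulas_over ar X A \<Longrightarrow>
      \<exists>\<psi> \<in> formulas_over ar' X A'. \<forall>e. sat N e \<psi> \<longleftrightarrow> sat M (h \<circ> e) \<phi>"
  shows "indiscernible ar M A (h \<circ> c)"
  unfolding indiscernible_def
proof (intro allI impI)
  fix n and s t :: "nat \<Rightarrow> 'i" and \<phi> :: "('r, 'c, 'a) fm"
  assume s: "strict_mono_on {..<n} s" and t: "strict_mono_on {..<n} t"
    and "wf ar \<phi>" "fv \<phi> \<subseteq> {..<n}" "params \<phi> \<subseteq> A"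
  then obtain \<psi> where \<psi>: "\<psi> \<in> formulas_over ar' {..<n} A'"
    and sat_\<psi>: "\<And>e. sat N e \<psi> \<longleftrightarrow> sat M (h \<circ> e) \<phi>"
    using translation[of \<phi> "{..<n}"] by (auto simp: formulas_over_def)
  have "sat N (\<lambda>k. c (s k)) \<psi> \<longleftrightarrow> sat N (\<lambda>k. c (t k)) \<psi>"
    using indiscernibleD[OF indisc s t \<psi>] .
  then show "sat M (\<lambda>k. (h \<circ> c) (s k)) \<phi> \<longleftrightarrow> sat M (\<lambda>k. (h \<circ> c) (t k)) \<phi>"
    by (simp add: sat_\<psi> comp_def)
qed

lemma simple_product_translation_fst:
  fixes M1 :: "('r1, 'c1, 'a1) struct" and M2 :: "('r2, 'c2, 'a2) struct"
    and A :: "('a1 \<times> 'a2) set" and ar2 :: "'r2 \<Rightarrow> nat"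
  assumes "\<phi> \<in> formulas_over ar1 X (fst ` A)"
  shows "\<exists>\<psi> \<in> formulas_over (sim_ar ar1 ar2) X A.
           \<forall>e. sat (simple_product M1 M2) e \<psi> \<longleftrightarrow> sat M1 (fst \<circ> e) \<phi>"
proof
  \<comment> \<open>\<open>undefined\<close> is the fixed constant of the other language; \<open>g\<close> lifts
    a parameter to a pair in \<open>A\<close>.\<close>
  define g :: "'a1 \<Rightarrow> 'a1 \<times> 'a2" where "g x = (x, SOME y. (x, y) \<in> A)" for x
  have "g ` fst ` A \<subseteq> A"
    unfolding g_def by (force intro: someI)
  with assms show "translate R1 Sim1 (\<lambda>c. (c, undefined)) g \<phi> \<in> formulas_over (sim_ar ar1 ar2) X A"
    by (simp add: formulas_over_def wf_translate) (meson image_mono order_trans)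
  have surj: "surj (fst :: 'a1 \<times> 'a2 \<Rightarrow> _)"
    by (rule surjI[of _ "\<lambda>x. (x, undefined)"]) simp
  show "\<forall>e. sat (simple_product M1 M2) e (translate R1 Sim1 (\<lambda>c. (c, undefined)) g \<phi>) \<longleftrightarrow>
           sat M1 (fst \<circ> e) \<phi>"
    by (intro allI sat_translate[OF surj]) (simp_all add: g_def simple_product_def)
qed

lemma simple_product_translation_snd:
  fixes M1 :: "('r1, 'c1, 'a1) struct" and M2 :: "('r2, 'c2, 'a2) struct"
    and A :: "('a1 \<times> 'a2) set" and ar1 :: "'r1 \<Rightarrow> nat"
  assumes "\<phi> \<in> formulas_over ar2 X (snd ` A)"
  shows "\<exists>\<psi> \<in> formulas_over (sim_ar ar1 ar2) X A.
           \<forall>e. sat (simple_product M1 M2) e \<psi> \<longleftrightarrow> sat M2 (snd \<circ> e) \<phi>"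
proof
  define g :: "'a2 \<Rightarrow> 'a1 \<times> 'a2" where "g y = (SOME x. (x, y) \<in> A, y)" for y
  have "g ` snd ` A \<subseteq> A"
    unfolding g_def by (force intro: someI)
  with assms show "translate R2 Sim2 (\<lambda>c. (undefined, c)) g \<phi> \<in> formulas_over (sim_ar ar1 ar2) X A"
    by (simp add: formulas_over_def wf_translate) (meson image_mono order_trans)
  have surj: "surj (snd :: 'a1 \<times> 'a2 \<Rightarrow> _)"
    by (rule surjI[of _ "\<lambda>y. (undefined, y)"]) simp
  show "\<forall>e. sat (simple_product M1 M2) e (translate R2 Sim2 (\<lambda>c. (undefined, c)) g \<phi>) \<longleftrightarrow>
           sat M2 (snd \<circ> e) \<phi>"
    by (intro allI sat_translate[OF surj]) (simp_all add: g_def simple_product_def)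
qed

theorem lemma3p4:
  fixes ar1 :: "'r1 \<Rightarrow> nat" and ar2 :: "'r2 \<Rightarrow> nat"
    and T1 :: "('r1, 'c1, 'a1) fm set" and T2 :: "('r2, 'c2, 'a2) fm set"
    and M1 :: "('r1, 'c1, 'a1) struct" and M2 :: "('r2, 'c2, 'a2) struct"
    and A :: "('a1 \<times> 'a2) set"
    and a :: "'i::linorder \<Rightarrow> 'a1" and b :: "'i \<Rightarrow> 'a2"
  assumes "\<forall>\<sigma>\<in>T1. sentence ar1 \<sigma>" and "\<forall>\<sigma>\<in>T2. sentence ar2 \<sigma>"
    and "models M1 T1" and "models M2 T2"
  shows "indiscernible (sim_ar ar1 ar2) (simple_product M1 M2) A (\<lambda>i. (a i, b i))
     \<longleftrightarrow> indiscernible ar1 M1 (fst ` A) a \<and> indiscernible ar2 M2 (snd ` A) b"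
proof
  assume indisc: "indiscernible (sim_ar ar1 ar2) (simple_product M1 M2) A (\<lambda>i. (a i, b i))"
  have "indiscernible ar1 M1 (fst ` A) (fst \<circ> (\<lambda>i. (a i, b i)))"
    using indisc simple_product_translation_fst by (rule indiscernible_transfer)
  moreover have "indiscernible ar2 M2 (snd ` A) (snd \<circ> (\<lambda>i. (a i, b i)))"
    using indisc simple_product_translation_snd by (rule indiscernible_transfer)
  ultimately show "indiscernible ar1 M1 (fst ` A) a \<and> indiscernible ar2 M2 (snd ` A) b"
    by (simp add: comp_def)
qed (simp add: indiscernible_simple_product)

end
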